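(* Let $\mu$ be a finite positive measure on $(\Omega,\mathcal B)$ with (countably many) atoms $A_1,A_2,\dots$ arranged so that $\mu(A_n)\ge\mu(A_{n+1})$, and let $C$ be the complement of the union of the atoms. For each $n$ put $B_n=C\cup\bigcup_{j>n}A_j$. Let $Z$ be a linear subspace of $L_\infty(\mu)$ which contains $L^0_\infty(C,\mu)=\{f\in L_\infty(\mu): f=0 \text{ off } C,\ \int f\,d\mu=0\}$ and contains the function $1_{A_n}-\frac{\mu(A_n)}{\mu(B_n)}1_{B_n}$ for every $n$ with $\mu(B_n)>0$. Then the weak$^*$ closure of $Z$ in $L_\infty(\mu)$ contains $L^0_\infty=\{f\in L_\infty(\mu):\int f\,d\mu=0\}$.
   Context: An atom of $\mu$ is a set $A$ with $\mu(A)>0$ such that each measurable subset of $A$ has measure $0$ or $\mu(A)$. The weak$^*$ topology on $L_\infty(\mu)$ is $\sigma(L_\infty,L_1)$. *)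

theory Defs
  imports "HOL-Analysis.Analysis"
begin

definition is_atom :: "'a measure \<Rightarrow> 'a set \<Rightarrow> bool" where
  "is_atom M A \<longleftrightarrow> A \<in> sets M \<and> measure M A > 0 \<and>
     (\<forall>B\<in>sets M. B \<subseteq> A \<longrightarrow> measure M B = 0 \<or> measure M B = measure M A)"

definition Linf :: "'a measure \<Rightarrow> ('a \<Rightarrow> real) set" where
  "Linf M = {f \<in> borel_measurable M. \<exists>c. AE x in M. \<bar>f x\<bar> \<le> c}"

text \<open>Closure of Z in the weak* topology sigma(L_infinity, L_1): f lies in it iff every
  basic weak* neighbourhood of f meets Z.\<close>
definition weak_star_closure :: "'a measure \<Rightarrow> ('a \<Rightarrow> real) set \<Rightarrow> ('a \<Rightarrow> real) set" where
  "weak_star_closure M Z = {f \<in> Linf M. \<forall>G (e::real). finite G \<and> (\<forall>g\<in>G. integrable M g) \<and> e > 0 \<longrightarrow>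
      (\<exists>z\<in>Z. \<forall>g\<in>G. \<bar>integral\<^sup>L M (\<lambda>x. (f x - z x) * g x)\<bar> < e)}"

end

theory Submission
  imports Defs
begin

text \<open>
  An f in L_infinity with integral 0 is a.e. constant on every atom. Let F_N be the conditional
  expectation of f with respect to the finite partition A_0, ..., A_N, B_N. Refining the trivial
  partition {Omega}, on which the conditional expectation is 0, to A_0, B_0, and then splitting
  B_N into A_(N+1) and B_(N+1), changes the conditional expectation by a multiple of
  1_(A_n) - mu(A_n)/mu(B_n) 1_(B_n), so every F_N lies in Z. Adding the part
  (f - average of f over C) 1_C, which lies in L^0_infinity(C), gives elements of Z bounded by
  3 ||f||_infinity that converge to f a.e.: they agree with f on A_0, ..., A_N, and on C they
  differ from f by the difference of the averages of f over B_N and over C, which tends to 0.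
  By dominated convergence this convergence is weak*.
\<close>

text \<open>Over a null set the average is 0 (division by zero); the proofs below use this.\<close>

definition set_average :: "'a measure \<Rightarrow> 'a set \<Rightarrow> ('a \<Rightarrow> real) \<Rightarrow> real" where
  "set_average M S f = (LINT x:S|M. f x) / measure M S"

lemma Linf_AE_bounded:
  assumes "f \<in> Linf M"
  obtains K where "0 \<le> K" "AE x in M. \<bar>f x\<bar> \<le> K"
proof -
  from assms obtain K where "AE x in M. \<bar>f x\<bar> \<le> K"
    by (auto simp: Linf_def)
  then show thesis
    by (intro that[of "max K 0"]) (auto elim: eventually_mono)
qed

context finite_measure
begin

lemma AE_not_in_measure_zero: "S \<in> sets M \<Longrightarrow> measure M S = 0 \<Longrightarrow> AE x in M. x \<notin> S"
  by (intro AE_not_in) (simp add: null_sets_def emeasure_eq_measure)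

lemma set_integral_eq_set_average_mult:
  assumes [measurable]: "S \<in> sets M" and f: "integrable M f"
  shows "(LINT x:S|M. f x) = set_average M S f * measure M S"
proof (cases "measure M S = 0")
  case True
  then have "(LINT x:S|M. f x) = 0"
    using AE_not_in_measure_zero[of S] unfolding set_lebesgue_integral_def
    by (intro integral_eq_zero_AE) (auto elim: eventually_mono)
  with True show ?thesis
    by simp
qed (simp add: set_average_def)

lemma set_integrable_if_integrable:
  fixes f :: "'a \<Rightarrow> real"
  assumes "S \<in> sets M" "integrable M f"
  shows "set_integrable M S f"
  unfolding set_integrable_def using assms by (rule integrable_mult_indicator)

lemma integral_indicator_diff_set_average:
  assumes [measurable]: "S \<in> sets M" and f: "integrable M f"
  shows "(\<integral>x. indicator S x * (f x - set_average M S f) \<partial>M) = 0"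
proof -
  have "(\<integral>x. indicator S x * (f x - set_average M S f) \<partial>M)
      = (\<integral>x. indicator S x * f x \<partial>M) - (\<integral>x. indicator S x * set_average M S f \<partial>M)"
    unfolding right_diff_distrib using integrable_mult_indicator[OF _ f, of S]
    by (intro Bochner_Integration.integral_diff) (auto simp: emeasure_eq_measure)
  also have "\<dots> = (LINT x:S|M. f x) - (LINT x:S|M. set_average M S f)"
    by (simp add: set_lebesgue_integral_def)
  also have "\<dots> = 0"
    by (simp add: set_integral_const emeasure_eq_measure set_integral_eq_set_average_mult[OF _ f])
  finally show ?thesis .
qed

lemma abs_set_average_le:
  assumes [measurable]: "S \<in> sets M" and f: "integrable M f"
    and bound: "AE x in M. \<bar>f x\<bar> \<le> K" and "0 \<le> K"
  shows "\<bar>set_average M S f\<bar> \<le> K"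
proof (cases "measure M S = 0")
  case False
  then have pos: "0 < measure M S"
    using measure_nonneg[of M S] by linarith
  have "\<bar>LINT x:S|M. f x\<bar> \<le> (LINT x:S|M. \<bar>f x\<bar>)"
    using set_integral_norm_bound[OF set_integrable_if_integrable[OF _ f]] by simp
  also have "\<dots> \<le> (LINT x:S|M. K)"
    using bound by (intro set_integral_mono_AE set_integrable_if_integrable integrable_abs f)
      (auto simp: set_integrable_def emeasure_eq_measure elim: eventually_mono)
  also have "\<dots> = K * measure M S"
    by (simp add: set_integral_const emeasure_eq_measure)
  finally show ?thesis
    using pos by (simp add: set_average_def pos_divide_le_eq)
qed (simp add: set_average_def \<open>0 \<le> K\<close>)

lemma integrable_if_Linf:
  assumes f: "f \<in> Linf M"
  shows "integrable M f"
proof -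
  obtain K where "AE x in M. \<bar>f x\<bar> \<le> K"
    using f by (rule Linf_AE_bounded)
  moreover have "f \<in> borel_measurable M"
    using f by (simp add: Linf_def)
  ultimately show ?thesis
    by (intro integrable_const_bound) auto
qed

lemma Linf_indicator_diff_set_average:
  assumes f: "f \<in> Linf M" and [measurable]: "S \<in> sets M"
  shows "(\<lambda>x. indicator S x * (f x - set_average M S f)) \<in> Linf M"
proof -
  obtain K where "0 \<le> K" and f_bounded: "AE x in M. \<bar>f x\<bar> \<le> K"
    using f by (rule Linf_AE_bounded)
  have "\<bar>set_average M S f\<bar> \<le> K"
    using integrable_if_Linf[OF f] f_bounded \<open>0 \<le> K\<close> by (intro abs_set_average_le) auto
  with f_bounded have "AE x in M. \<bar>indicator S x * (f x - set_average M S f)\<bar> \<le> 2 * K"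
    by (auto simp: indicator_def elim!: eventually_mono)
  then show ?thesis
    using f unfolding Linf_def by auto
qed

lemma set_average_indicator_Un:
  assumes [measurable]: "S \<in> sets M" "T \<in> sets M"
    and disjoint: "S \<inter> T = {}" and pos: "measure M T > 0" and f: "integrable M f"
  shows "set_average M S f * indicator S x + set_average M T f * indicator T x
       = set_average M (S \<union> T) f * indicator (S \<union> T) x
         + (set_average M S f - set_average M (S \<union> T) f)
           * (indicator S x - measure M S / measure M T * indicator T x)"
proof -
  let ?a = "\<lambda>X. set_average M X f"
  have "?a (S \<union> T) * measure M (S \<union> T) = ?a S * measure M S + ?a T * measure M T"
    using set_integral_Un[OF disjoint set_integrable_if_integrable set_integrable_if_integrable]
    by (simp add: f set_integral_eq_set_average_mult)
  moreover have "measure M (S \<union> T) = measure M S + measure M T"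
    using disjoint by (simp add: measure_Union)
  ultimately have "(?a T - ?a (S \<union> T)) * measure M T = - (?a S - ?a (S \<union> T)) * measure M S"
    by (simp add: algebra_simps)
  then have average_T: "?a T = ?a (S \<union> T) - (?a S - ?a (S \<union> T)) * (measure M S / measure M T)"
    using pos by (simp add: field_simps)
  have "indicator (S \<union> T) x = (indicator S x + indicator T x :: real)"
    using disjoint by (rule indicator_disj_union)
  then show ?thesis
    unfolding average_T by algebra
qed

lemma set_average_indicator_Un_null:
  assumes [measurable]: "S \<in> sets M" "T \<in> sets M"
    and null: "measure M T = 0" and f: "integrable M f"
  shows "AE x in M. set_average M S f * indicator S x + set_average M T f * indicator T x
                  = set_average M (S \<union> T) f * indicator (S \<union> T) x"
proof -
  have T_null: "T \<in> null_sets M"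
    using null by (simp add: null_sets_def emeasure_eq_measure)
  have "(LINT x:S \<union> T|M. f x) = (LINT x:S|M. f x)"
    using AE_not_in[OF T_null] f
    by (intro set_integral_cong_set) (auto simp: set_borel_measurable_def elim!: eventually_mono)
  moreover have "measure M (S \<union> T) = measure M S"
    using T_null by (simp add: measure_Un_null_set)
  ultimately have average_Un: "set_average M (S \<union> T) f = set_average M S f"
    by (simp add: set_average_def)
  have average_T: "set_average M T f = 0"
    by (simp add: set_average_def null)
  show ?thesis
    using AE_not_in[OF T_null] by (rule eventually_mono) (simp add: average_Un average_T indicator_def)
qed

lemma atom_AE_eq_set_average:
  fixes f :: "'a \<Rightarrow> real"
  assumes atom: "is_atom M A" and f: "integrable M f"
  shows "AE x in M. x \<in> A \<longrightarrow> f x = set_average M A f"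
proof -
  define c where "c = set_average M A f"
  have [measurable]: "A \<in> sets M" and pos: "0 < measure M A"
    and atom_subset: "\<And>S. S \<in> sets M \<Longrightarrow> S \<subseteq> A \<Longrightarrow> measure M S = 0 \<or> measure M S = measure M A"
    using atom unfolding is_atom_def by auto
  have [measurable]: "f \<in> borel_measurable M"
    using f by simp
  have one_sided: "AE x in M. x \<in> A \<longrightarrow> f x = c"
    if sign: "AE x in M. x \<in> A \<longrightarrow> 0 \<le> \<sigma> * (f x - c)" and "\<sigma> \<noteq> 0" for \<sigma> :: real
  proof -
    have "(\<integral>x. indicator A x * (\<sigma> * (f x - c)) \<partial>M) = \<sigma> * (\<integral>x. indicator A x * (f x - c) \<partial>M)"
      by (simp add: mult.left_commute)
    also have "\<dots> = 0"
      unfolding c_def using f by (simp add: integral_indicator_diff_set_average)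
    moreover have "integrable M (\<lambda>x. indicator A x * (\<sigma> * (f x - c)))"
      using integrable_mult_indicator[of A M "\<lambda>x. \<sigma> * (f x - c)"] f by simp
    moreover have "AE x in M. 0 \<le> indicator A x * (\<sigma> * (f x - c))"
      using sign by (rule eventually_mono) (simp add: indicator_def)
    ultimately have "AE x in M. indicator A x * (\<sigma> * (f x - c)) = 0"
      by (simp add: integral_nonneg_eq_0_iff_AE)
    then show ?thesis
      using \<open>\<sigma> \<noteq> 0\<close> by (auto elim!: eventually_mono simp: indicator_def split: if_splits)
  qed
  \<comment> \<open>P and N are disjoint subsets of the atom A, so one of them is null; on A the function
    f - c then has a constant sign a.e., and its integral over A vanishes.\<close>
  define P where "P = {x \<in> space M. x \<in> A \<and> f x > c}"
  define N where "N = {x \<in> space M. x \<in> A \<and> f x < c}"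
  have P_sets [measurable]: "P \<in> sets M" and N_sets [measurable]: "N \<in> sets M"
    unfolding P_def N_def by measurable
  have "P \<subseteq> A" "N \<subseteq> A"
    by (auto simp: P_def N_def)
  have "P \<inter> N = {}"
    by (auto simp: P_def N_def)
  then have "measure M P + measure M N = measure M (P \<union> N)"
    by (simp add: finite_measure_Union)
  also have "\<dots> \<le> measure M A"
    using \<open>P \<subseteq> A\<close> \<open>N \<subseteq> A\<close> by (intro finite_measure_mono) auto
  finally have "measure M P = 0 \<or> measure M N = 0"
    using atom_subset[OF P_sets \<open>P \<subseteq> A\<close>] atom_subset[OF N_sets \<open>N \<subseteq> A\<close>] pos by auto
  then show ?thesis
  proof
    assume "measure M P = 0"
    with AE_not_in_measure_zero[OF P_sets] show ?thesis
      unfolding c_def[symmetric] by (intro one_sided[of "-1"]) (auto simp: P_def elim!: eventually_mono)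
  next
    assume "measure M N = 0"
    with AE_not_in_measure_zero[OF N_sets] show ?thesis
      unfolding c_def[symmetric] by (intro one_sided[of 1]) (auto simp: N_def elim!: eventually_mono)
  qed
qed

end

lemma weak_star_closure_bounded_AE_limit:
  fixes z :: "nat \<Rightarrow> 'a \<Rightarrow> real"
  assumes f: "f \<in> Linf M" and z_in_Z: "\<And>N. z N \<in> Z"
    and [measurable]: "\<And>N. z N \<in> borel_measurable M"
    and z_bounded: "\<And>N. AE x in M. \<bar>z N x\<bar> \<le> K"
    and z_tendsto: "AE x in M. (\<lambda>N. z N x) \<longlonglongrightarrow> f x"
  shows "f \<in> weak_star_closure M Z"
proof -
  obtain K' where f_bounded: "AE x in M. \<bar>f x\<bar> \<le> K'"
    using f by (rule Linf_AE_bounded)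
  have [measurable]: "f \<in> borel_measurable M"
    using f by (simp add: Linf_def)
  have tendsto_0: "(\<lambda>N. \<integral>x. (f x - z N x) * g x \<partial>M) \<longlonglongrightarrow> 0" if g: "integrable M g" for g
  proof -
    have [measurable]: "g \<in> borel_measurable M"
      using g by simp
    have "(\<lambda>N. \<integral>x. (f x - z N x) * g x \<partial>M) \<longlonglongrightarrow> (\<integral>x. 0 \<partial>M)"
    proof (rule integral_dominated_convergence[where w = "\<lambda>x. (K' + K) * \<bar>g x\<bar>"])
      show "AE x in M. (\<lambda>N. (f x - z N x) * g x) \<longlonglongrightarrow> 0"
        using z_tendsto
      proof eventually_elim
        case (elim x)
        then have "(\<lambda>N. (f x - z N x) * g x) \<longlonglongrightarrow> (f x - f x) * g x"
          by (intro tendsto_intros)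
        then show ?case
          by simp
      qed
      show "AE x in M. norm ((f x - z N x) * g x) \<le> (K' + K) * \<bar>g x\<bar>" for N
        using f_bounded z_bounded[of N]
      proof eventually_elim
        case (elim x)
        then have "\<bar>f x - z N x\<bar> \<le> K' + K"
          by linarith
        then show ?case
          unfolding real_norm_def abs_mult by (rule mult_right_mono) simp
      qed
      show "integrable M (\<lambda>x. (K' + K) * \<bar>g x\<bar>)"
        using g by simp
    qed (simp, measurable)
    then show ?thesis
      by simp
  qed
  show ?thesis
    unfolding weak_star_closure_def
  proof (intro CollectI conjI allI impI f)
    fix G :: "('a \<Rightarrow> real) set" and e :: real
    assume "finite G \<and> (\<forall>g\<in>G. integrable M g) \<and> 0 < e"
    then have G: "finite G" "\<And>g. g \<in> G \<Longrightarrow> integrable M g" and "0 < e"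
      by auto
    have "\<forall>\<^sub>F N in sequentially. \<bar>\<integral>x. (f x - z N x) * g x \<partial>M\<bar> < e" if "g \<in> G" for g
      using order_tendstoD(2)[OF tendsto_rabs[OF tendsto_0[OF G(2)[OF that]]]] \<open>0 < e\<close> by simp
    then have "\<forall>\<^sub>F N in sequentially. \<forall>g\<in>G. \<bar>\<integral>x. (f x - z N x) * g x \<partial>M\<bar> < e"
      using G(1) by (intro eventually_ball_finite) auto
    then obtain N0 where "\<forall>N\<ge>N0. \<forall>g\<in>G. \<bar>\<integral>x. (f x - z N x) * g x \<partial>M\<bar> < e"
      unfolding eventually_sequentially by blast
    then show "\<exists>z\<in>Z. \<forall>g\<in>G. \<bar>\<integral>x. (f x - z x) * g x \<partial>M\<bar> < e"
      using z_in_Z by blast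
  qed
qed

locale atomic_splitting = finite_measure M for M :: "'a measure" +
  fixes A :: "nat \<Rightarrow> 'a set" and C :: "'a set" and B :: "nat \<Rightarrow> 'a set"
  assumes atoms: "\<And>n. is_atom M (A n) \<or> A n = {}"
    and disjoint: "disjoint_family A"
    and C_eq: "C = space M - (\<Union>n. A n)"
    and B_eq: "\<And>n. B n = C \<union> (\<Union>j\<in>{n<..}. A j)"
begin

lemma sets_A [measurable]: "A n \<in> sets M"
  using atoms[of n] by (auto simp: is_atom_def)

lemma sets_C [measurable]: "C \<in> sets M"
  by (simp add: C_eq)

lemma sets_B [measurable]: "B n \<in> sets M"
  by (simp add: B_eq)

lemma mem_A_unique: "x \<in> A m \<Longrightarrow> x \<in> A n \<Longrightarrow> m = n"
  using disjoint by (auto simp: disjoint_family_on_def)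

lemma not_mem_C_if_mem_A: "x \<in> A m \<Longrightarrow> x \<notin> C"
  by (auto simp: C_eq)

lemma mem_B_iff: "x \<in> A m \<Longrightarrow> x \<in> B N \<longleftrightarrow> N < m"
  using mem_A_unique not_mem_C_if_mem_A by (auto simp: B_eq)

lemma B_subset_C_Un_A: "B N \<subseteq> C \<union> (\<Union>m. A m)"
  by (auto simp: B_eq)

lemma C_subset_B: "C \<subseteq> B N"
  by (simp add: B_eq)

lemma B_eq_A_Suc_Un_B_Suc: "B N = A (Suc N) \<union> B (Suc N)"
  by (auto simp: B_eq Suc_le_eq dest: Suc_lessI)

lemma A_Suc_Int_B_Suc: "A (Suc N) \<inter> B (Suc N) = {}"
  using mem_B_iff by blast

lemma space_eq_A0_Un_B0: "space M = A 0 \<union> B 0"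
proof (intro equalityI subsetI)
  fix x assume "x \<in> space M"
  then consider "x \<in> C" | m where "x \<in> A m"
    by (auto simp: C_eq)
  then show "x \<in> A 0 \<union> B 0"
  proof cases
    case 1
    then show ?thesis
      using C_subset_B by blast
  next
    case (2 m)
    then show ?thesis
      by (cases m) (auto simp: mem_B_iff)
  qed
next
  fix x assume "x \<in> A 0 \<union> B 0"
  then show "x \<in> space M"
    using sets.sets_into_space[OF sets_A] by (auto simp: B_eq C_eq)
qed

lemma A0_Int_B0: "A 0 \<inter> B 0 = {}"
  using mem_B_iff by blast

lemma decseq_B: "decseq B"
  unfolding decseq_def B_eq by auto

lemma Inter_B: "(\<Inter>N. B N) = C"
  using mem_B_iff C_subset_B by (auto simp: B_eq) (metis less_irrefl)

lemma set_average_B_tendsto: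
  assumes f: "integrable M f" and pos: "measure M C > 0"
  shows "(\<lambda>N. set_average M (B N) f) \<longlonglongrightarrow> set_average M C f"
proof -
  have "(\<lambda>N. LINT x:B N|M. f x) \<longlonglongrightarrow> (LINT x:C|M. f x)"
    using set_integral_cont_down[OF sets_B decseq_B set_integrable_if_integrable[OF sets_B f]]
    by (simp add: Inter_B)
  moreover have "(\<lambda>N. measure M (B N)) \<longlonglongrightarrow> measure M C"
    using finite_Lim_measure_decseq[OF _ decseq_B] by (simp add: Inter_B image_subset_iff)
  ultimately show ?thesis
    unfolding set_average_def using pos by (intro tendsto_divide) auto
qed

definition partition_average :: "('a \<Rightarrow> real) \<Rightarrow> nat \<Rightarrow> 'a \<Rightarrow> real" where
  "partition_average f N x =
     (\<Sum>n\<le>N. set_average M (A n) f * indicator (A n) x) + set_average M (B N) f * indicator (B N) x"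

lemma borel_measurable_partition_average [measurable]: "partition_average f N \<in> borel_measurable M"
  unfolding partition_average_def by measurable

lemma partition_average_on_A:
  assumes "x \<in> A m"
  shows "partition_average f N x = (if m \<le> N then set_average M (A m) f else set_average M (B N) f)"
proof -
  have "(\<Sum>n\<le>N. set_average M (A n) f * indicator (A n) x) = (\<Sum>n\<le>N. if n = m then set_average M (A m) f else 0)"
    using assms mem_A_unique by (intro sum.cong) (auto simp: indicator_def)
  then show ?thesis
    using assms by (simp add: partition_average_def mem_B_iff not_le)
qed

lemma partition_average_on_C: "x \<in> C \<Longrightarrow> partition_average f N x = set_average M (B N) f"
  using not_mem_C_if_mem_A C_subset_B
  by (auto simp: partition_average_def indicator_def intro!: sum.neutral)

lemma partition_average_outside: "x \<notin> C \<union> (\<Union>m. A m) \<Longrightarrow> partition_average f N x = 0"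
  using B_subset_C_Un_A[of N] by (auto simp: partition_average_def indicator_def)

lemma abs_partition_average_le:
  assumes "integrable M f" "AE x in M. \<bar>f x\<bar> \<le> K" "0 \<le> K"
  shows "\<bar>partition_average f N x\<bar> \<le> K"
proof (cases "x \<in> C \<union> (\<Union>m. A m)")
  case True
  with assms show ?thesis
    by (auto simp: partition_average_on_C partition_average_on_A abs_set_average_le)
qed (simp add: partition_average_outside \<open>0 \<le> K\<close>)

lemma partition_average_in_Z:
  fixes Z :: "('a \<Rightarrow> real) set"
  assumes f: "integrable M f" and mean_zero: "integral\<^sup>L M f = 0"
    and Z_zero: "(\<lambda>x. 0) \<in> Z"
    and Z_add: "\<And>g h. g \<in> Z \<Longrightarrow> h \<in> Z \<Longrightarrow> (\<lambda>x. g x + h x) \<in> Z"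
    and Z_scale: "\<And>c g. g \<in> Z \<Longrightarrow> (\<lambda>x. c * g x) \<in> Z"
    and Z_ae: "\<And>g h. g \<in> Z \<Longrightarrow> h \<in> borel_measurable M \<Longrightarrow> (AE x in M. g x = h x) \<Longrightarrow> h \<in> Z"
    and Z_split: "\<And>n. measure M (B n) > 0 \<Longrightarrow>
      (\<lambda>x. indicator (A n) x - measure M (A n) / measure M (B n) * indicator (B n) x) \<in> Z"
  shows "partition_average f N \<in> Z"
proof -
  let ?a = "\<lambda>S. set_average M S f"
  have refine: "(\<lambda>x. g x + ?a S * indicator S x + ?a T * indicator T x) \<in> Z"
    if start: "(\<lambda>x. g x + ?a (S \<union> T) * indicator (S \<union> T) x) \<in> Z"
      and [measurable]: "g \<in> borel_measurable M" "S \<in> sets M" "T \<in> sets M"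
      and disjoint: "S \<inter> T = {}"
      and split: "measure M T > 0 \<Longrightarrow> (\<lambda>x. indicator S x - measure M S / measure M T * indicator T x) \<in> Z"
    for g S T
  proof (cases "measure M T > 0")
    case True
    then show ?thesis
      using Z_add[OF start Z_scale[OF split[OF True], of "?a S - ?a (S \<union> T)"]]
      by (simp add: set_average_indicator_Un[OF that(3,4) disjoint True f] add.assoc)
  next
    case False
    then have "measure M T = 0"
      using measure_nonneg[of M T] by linarith
    from set_average_indicator_Un_null[OF that(3,4) this f] show ?thesis
      by (intro Z_ae[OF start]) (auto elim!: eventually_mono)
  qed
  show ?thesis
  proof (induction N)
    case 0
    have "?a (A 0 \<union> B 0) = 0"
      using mean_zero f by (simp add: set_average_def space_eq_A0_Un_B0[symmetric] set_integral_space)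
    then have "(\<lambda>x. 0 + ?a (A 0 \<union> B 0) * indicator (A 0 \<union> B 0) x) \<in> Z"
      using Z_zero by simp
    from refine[OF this _ sets_A sets_B A0_Int_B0 Z_split] show ?case
      by (simp add: partition_average_def del: sum_mult_indicator)
  next
    case (Suc N)
    then have "(\<lambda>x. (\<Sum>n\<le>N. ?a (A n) * indicator (A n) x)
        + ?a (A (Suc N) \<union> B (Suc N)) * indicator (A (Suc N) \<union> B (Suc N)) x) \<in> Z"
      by (simp add: partition_average_def B_eq_A_Suc_Un_B_Suc[symmetric] del: sum_mult_indicator)
    moreover have "(\<lambda>x. \<Sum>n\<le>N. ?a (A n) * indicator (A n) x) \<in> borel_measurable M"
      by measurable
    ultimately show ?case
      using refine[OF _ _ sets_A sets_B A_Suc_Int_B_Suc Z_split]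
      by (simp add: partition_average_def add.assoc del: sum_mult_indicator)
  qed
qed

lemma partition_average_plus_C_part_bounded:
  assumes f: "f \<in> Linf M"
  shows "\<exists>K. \<forall>N. AE x in M. \<bar>partition_average f N x + indicator C x * (f x - set_average M C f)\<bar> \<le> K"
proof -
  obtain K where "0 \<le> K" and f_bounded: "AE x in M. \<bar>f x\<bar> \<le> K"
    using f by (rule Linf_AE_bounded)
  have average_C: "\<bar>set_average M C f\<bar> \<le> K"
    using integrable_if_Linf[OF f] f_bounded \<open>0 \<le> K\<close> by (intro abs_set_average_le) auto
  have average_partition: "\<bar>partition_average f N x\<bar> \<le> K" for N x
    using integrable_if_Linf[OF f] f_bounded \<open>0 \<le> K\<close> by (rule abs_partition_average_le)
  have "AE x in M. \<bar>partition_average f N x + indicator C x * (f x - set_average M C f)\<bar> \<le> 3 * K"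
    for N
    using f_bounded
  proof (rule eventually_mono)
    fix x assume "\<bar>f x\<bar> \<le> K"
    with average_C average_partition[of N x]
    show "\<bar>partition_average f N x + indicator C x * (f x - set_average M C f)\<bar> \<le> 3 * K"
      by (cases "x \<in> C") auto
  qed
  then show ?thesis
    by blast
qed

lemma partition_average_AE_tendsto:
  assumes f: "integrable M f"
  shows "AE x in M. (\<lambda>N. partition_average f N x + indicator C x * (f x - set_average M C f)) \<longlonglongrightarrow> f x"
proof -
  have "AE x in M. x \<in> A m \<longrightarrow> f x = set_average M (A m) f" for m
    using atoms[of m] atom_AE_eq_set_average[OF _ f] by auto
  then have on_A: "AE x in M. \<forall>m. x \<in> A m \<longrightarrow> f x = set_average M (A m) f"
    by (simp add: AE_all_countable)
  have on_C: "AE x in M. x \<in> C \<longrightarrow> (\<lambda>N. set_average M (B N) f) \<longlonglongrightarrow> set_average M C f"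
  proof (cases "measure M C > 0")
    case True
    then show ?thesis
      using set_average_B_tendsto[OF f] by simp
  next
    case False
    then have "measure M C = 0"
      using measure_nonneg[of M C] by linarith
    from AE_not_in_measure_zero[OF sets_C this] show ?thesis
      by (rule eventually_mono) simp
  qed
  show ?thesis
    using on_A on_C AE_space
  proof eventually_elim
    case (elim x)
    then consider "x \<in> C" | m where "x \<in> A m"
      by (auto simp: C_eq)
    then show ?case
    proof cases
      case 1
      with elim have "(\<lambda>N. set_average M (B N) f + (f x - set_average M C f))
          \<longlonglongrightarrow> set_average M C f + (f x - set_average M C f)"
        by (intro tendsto_intros) auto
      with 1 show ?thesis
        by (simp add: partition_average_on_C)
    next
      case (2 m)
      with elim have "\<forall>N\<ge>m. partition_average f N x + indicator C x * (f x - set_average M C f) = f x"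
        by (simp add: partition_average_on_A not_mem_C_if_mem_A)
      then show ?thesis
        by (intro tendsto_eventually) (auto simp: eventually_sequentially)
    qed
  qed
qed

end

theorem lemma2p1:
  fixes M :: "'a measure" and A :: "nat \<Rightarrow> 'a set" and Z :: "('a \<Rightarrow> real) set"
    and C :: "'a set" and B :: "nat \<Rightarrow> 'a set"
  assumes fin: "finite_measure M"
    and atoms: "\<And>n. is_atom M (A n) \<or> A n = {}"
    and disj: "disjoint_family A"
    and decr: "\<And>n. measure M (A n) \<ge> measure M (A (Suc n))"
    and C_def: "C = space M - (\<Union>n. A n)"
    and C_no_atom: "\<And>D. D \<subseteq> C \<Longrightarrow> \<not> is_atom M D"
    and B_def: "\<And>n. B n = C \<union> (\<Union>j\<in>{n<..}. A j)"
    and Z_sub: "Z \<subseteq> Linf M"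
    and Z_zero: "(\<lambda>x. 0) \<in> Z"
    and Z_add: "\<And>f g. f \<in> Z \<Longrightarrow> g \<in> Z \<Longrightarrow> (\<lambda>x. f x + g x) \<in> Z"
    and Z_scale: "\<And>c f. f \<in> Z \<Longrightarrow> (\<lambda>x. c * f x) \<in> Z"
    and Z_ae: "\<And>f g. f \<in> Z \<Longrightarrow> g \<in> borel_measurable M \<Longrightarrow> (AE x in M. f x = g x) \<Longrightarrow> g \<in> Z"
    and Z_L0C: "\<And>f. f \<in> Linf M \<Longrightarrow> (AE x in M. x \<notin> C \<longrightarrow> f x = 0) \<Longrightarrow>
                  integral\<^sup>L M f = 0 \<Longrightarrow> f \<in> Z"
    and Z_An: "\<And>n. measure M (B n) > 0 \<Longrightarrow>
                  (\<lambda>x. indicator (A n) x - measure M (A n) / measure M (B n) * indicator (B n) x) \<in> Z"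
  shows "{f \<in> Linf M. integral\<^sup>L M f = 0} \<subseteq> weak_star_closure M Z"
proof
  fix f assume "f \<in> {f \<in> Linf M. integral\<^sup>L M f = 0}"
  then have f: "f \<in> Linf M" and mean_zero: "integral\<^sup>L M f = 0"
    by auto
  interpret atomic_splitting M A C B
    using fin atoms disj C_def B_def by (simp add: atomic_splitting_def atomic_splitting_axioms_def)
  define z where "z N x = partition_average f N x + indicator C x * (f x - set_average M C f)" for N x
  have f_int: "integrable M f"
    using f by (rule integrable_if_Linf)
  have "(\<lambda>x. indicator C x * (f x - set_average M C f)) \<in> Z"
    using Z_L0C[OF Linf_indicator_diff_set_average[OF f sets_C]]
      integral_indicator_diff_set_average[OF sets_C f_int] by simp
  with partition_average_in_Z[OF f_int mean_zero Z_zero Z_add Z_scale Z_ae Z_An]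
  have z_in_Z: "z N \<in> Z" for N
    unfolding z_def by (rule Z_add)
  moreover have "z N \<in> borel_measurable M" for N
    using z_in_Z Z_sub by (auto simp: Linf_def)
  moreover obtain K where "\<And>N. AE x in M. \<bar>z N x\<bar> \<le> K"
    unfolding z_def using partition_average_plus_C_part_bounded[OF f] by blast
  moreover have "AE x in M. (\<lambda>N. z N x) \<longlonglongrightarrow> f x"
    unfolding z_def using f_int by (rule partition_average_AE_tendsto)
  ultimately show "f \<in> weak_star_closure M Z"
    using f by (intro weak_star_closure_bounded_AE_limit)
qed

end
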